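(* Let $X$ be a robust $X$-set parameter and let $G$ and $G'$ be graphs such that $\mathfrak{X}(G)\cong\mathfrak{X}(G')$. If $X(K_1)=0$, or if $G$ and $G'$ both have no isolated vertices, then $|V(G)|=|V(G')|$ and there is a relabeling of the vertices of $G'$ (i.e., a bijection $\psi:V(G)\to V(G')$) such that for every $S\subseteq V(G)$, $S$ is an $X$-set of $G$ if and only if $\psi(S)$ is an $X$-set of $G'$.
   Context: All graphs are finite, simple, undirected, with nonempty vertex set. A super $X$-set parameter $X$ assigns to each graph $G$ a family of subsets of $V(G)$, called the $X$-sets of $G$, such that: every graph isomorphism $V(G)\to V(G')$ maps $X$-sets of $G$ to $X$-sets of $G'$; every graph has at least one $X$-set; and (Superset) if $S$ is an $X$-set of $G$ and $S\subseteq S'\subseteq V(G)$, then $S'$ is an $X$-set of $G$. The number $X(G)$ is the minimum cardinality of an $X$-set of $G$. A robust $X$-set parameter is a super $X$-set parameter that additionally satisfies: ($(n-1)$-set) if $G$ is connected of order $n\ge 2$, every set of $n-1$ vertices of $G$ is an $X$-set; (Component consistency) if $G_1,\dots,G_k$ are the connected components of $G$, then $S\subseteq V(G)$ is an $X$-set of $G$ if and only if $S\cap V(G_i)$ is an $X$-set of $G_i$ for every $i$. The $X$-TAR graph $\mathfrak{X}(G)$ has as vertices the $X$-sets of $G$, with $S_1S_2$ an edge iff $|S_1\ominus S_2|=1$ ($\ominus$ = symmetric difference). $K_1$ is the one-vertex graph. *)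

theory Defs
  imports Main "HOL-Library.Infinite_Typeclass"
begin

type_synonym 'v graph = "'v set \<times> ('v \<times> 'v) set"

definition verts :: "'v graph \<Rightarrow> 'v set" where "verts G = fst G"
definition edges :: "'v graph \<Rightarrow> ('v \<times> 'v) set" where "edges G = snd G"

definition is_graph :: "'v graph \<Rightarrow> bool" where
  "is_graph G \<longleftrightarrow> finite (verts G) \<and> verts G \<noteq> {} \<and>
     edges G \<subseteq> verts G \<times> verts G \<and> sym (edges G) \<and> irrefl (edges G)"

definition graph_iso :: "'a graph \<Rightarrow> 'b graph \<Rightarrow> ('a \<Rightarrow> 'b) \<Rightarrow> bool" where
  "graph_iso G H f \<longleftrightarrow> bij_betw f (verts G) (verts H) \<and>
     (\<forall>u\<in>verts G. \<forall>v\<in>verts G. (u, v) \<in> edges G \<longleftrightarrow> (f u, f v) \<in> edges H)"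

definition isomorphic :: "'a graph \<Rightarrow> 'b graph \<Rightarrow> bool" where
  "isomorphic G H \<longleftrightarrow> (\<exists>f. graph_iso G H f)"

definition connected_graph :: "'v graph \<Rightarrow> bool" where
  "connected_graph G \<longleftrightarrow> (\<forall>u\<in>verts G. \<forall>v\<in>verts G. (u, v) \<in> (edges G)\<^sup>*)"

definition component_of :: "'v graph \<Rightarrow> 'v \<Rightarrow> 'v set" where
  "component_of G v = {u. (v, u) \<in> (edges G)\<^sup>*}"

definition components :: "'v graph \<Rightarrow> 'v set set" where
  "components G = component_of G ` verts G"

definition induced :: "'v graph \<Rightarrow> 'v set \<Rightarrow> 'v graph" where
  "induced G C = (C, edges G \<inter> (C \<times> C))"

definition K1 :: "'v \<Rightarrow> 'v graph" where "K1 v = ({v}, {})"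

definition no_isolated :: "'v graph \<Rightarrow> bool" where
  "no_isolated G \<longleftrightarrow> (\<forall>v\<in>verts G. \<exists>u. (v, u) \<in> edges G)"

text \<open>A set parameter assigns to every graph (on vertex type 'v) a family of
  vertex subsets. We use an infinite vertex type so that every finite graph
  is represented up to isomorphism.\<close>
definition super_param :: "('v::infinite graph \<Rightarrow> 'v set set) \<Rightarrow> bool" where
  "super_param X \<longleftrightarrow>
     (\<forall>G. is_graph G \<longrightarrow> (\<forall>S\<in>X G. S \<subseteq> verts G)) \<and>
     (\<forall>G H f. is_graph G \<longrightarrow> is_graph H \<longrightarrow> graph_iso G H f \<longrightarrow>
        (\<forall>S\<in>X G. f ` S \<in> X H)) \<and>
     (\<forall>G. is_graph G \<longrightarrow> X G \<noteq> {}) \<and>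
     (\<forall>G S S'. is_graph G \<longrightarrow> S \<in> X G \<longrightarrow> S \<subseteq> S' \<longrightarrow> S' \<subseteq> verts G \<longrightarrow> S' \<in> X G)"

definition robust_param :: "('v::infinite graph \<Rightarrow> 'v set set) \<Rightarrow> bool" where
  "robust_param X \<longleftrightarrow> super_param X \<and>
     (\<forall>G. is_graph G \<longrightarrow> connected_graph G \<longrightarrow> card (verts G) \<ge> 2 \<longrightarrow>
        (\<forall>S. S \<subseteq> verts G \<longrightarrow> card S = card (verts G) - 1 \<longrightarrow> S \<in> X G)) \<and>
     (\<forall>G S. is_graph G \<longrightarrow> S \<subseteq> verts G \<longrightarrow>
        (S \<in> X G \<longleftrightarrow> (\<forall>C\<in>components G. S \<inter> C \<in> X (induced G C))))"

definition param_num :: "('v graph \<Rightarrow> 'v set set) \<Rightarrow> 'v graph \<Rightarrow> nat" where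
  "param_num X G = Min (card ` X G)"

definition tar_graph :: "('v graph \<Rightarrow> 'v set set) \<Rightarrow> 'v graph \<Rightarrow> 'v set graph" where
  "tar_graph X G = (X G, {(S1, S2). S1 \<in> X G \<and> S2 \<in> X G \<and>
                                  card ((S1 - S2) \<union> (S2 - S1)) = 1})"

end

theory Submission
  imports Defs
begin

text \<open>The X-sets of a graph form an up-closed family on its vertex set that contains the whole
  set and, by robustness, every coatom \<open>V - {v}\<close>. In an up-closed family the distance in the
  TAR graph is the size of the symmetric difference, so an isomorphism \<open>\<phi>\<close> of TAR graphs
  preserves it. Each coatom \<open>V - {v}\<close> is at distance one from \<open>V\<close>, so \<open>\<phi>(V - {v})\<close> and
  \<open>\<phi> V\<close> differ in a single vertex \<open>\<psi> v\<close>; comparing distances to \<open>\<phi> V\<close> and \<open>\<phi>(V - {v})\<close> shows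
  that \<open>\<phi> S\<close> and \<open>\<phi> V\<close> differ exactly on \<open>\<psi> ` (V - S)\<close>. Hence \<open>\<psi>\<close> is injective in both
  directions, and up-closure lets one pass between \<open>\<phi> S\<close> and \<open>\<psi> ` S\<close>.\<close>

definition upclosed :: "'a set \<Rightarrow> 'a set set \<Rightarrow> bool" where
  "upclosed V F \<longleftrightarrow> F \<subseteq> Pow V \<and> (\<forall>S T. S \<in> F \<longrightarrow> S \<subseteq> T \<longrightarrow> T \<subseteq> V \<longrightarrow> T \<in> F)"

lemma upclosed_subset: "upclosed V F \<Longrightarrow> S \<in> F \<Longrightarrow> S \<subseteq> V"
  unfolding upclosed_def by blast

lemma upclosed_superset: "upclosed V F \<Longrightarrow> S \<in> F \<Longrightarrow> S \<subseteq> T \<Longrightarrow> T \<subseteq> V \<Longrightarrow> T \<in> F"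
  unfolding upclosed_def by auto

lemma upclosed_finite_member: "upclosed V F \<Longrightarrow> finite V \<Longrightarrow> S \<in> F \<Longrightarrow> finite S"
  by (metis upclosed_subset finite_subset)

lemma card_sym_diff_triangle:
  assumes "finite A" "finite B" "finite C"
  shows "card (sym_diff A C) \<le> card (sym_diff A B) + card (sym_diff B C)"
proof -
  have "card (sym_diff A C) \<le> card (sym_diff A B \<union> sym_diff B C)"
    by (rule card_mono) (use assms in auto)
  also have "\<dots> \<le> card (sym_diff A B) + card (sym_diff B C)"
    by (rule card_Un_le)
  finally show ?thesis .
qed

lemma card_sym_diff_flip:
  assumes "finite A" "finite B" "sym_diff C B = {y}"
  shows "card (sym_diff A C) =
    (if y \<in> sym_diff A B then card (sym_diff A B) - 1 else card (sym_diff A B) + 1)"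
proof -
  have "z \<in> C \<longleftrightarrow> (z \<in> B \<longleftrightarrow> z \<noteq> y)" for z
    using assms(3) by (auto simp: set_eq_iff)
  then have "sym_diff A C =
      (if y \<in> sym_diff A B then sym_diff A B - {y} else insert y (sym_diff A B))"
    by auto
  then show ?thesis using assms(1,2) by simp
qed

lemma upclosed_step_towards:
  assumes F: "upclosed V F" and S: "S \<in> F" and T: "T \<in> F" and "S \<noteq> T"
  obtains S' x where "S' \<in> F" "sym_diff S S' = {x}" "sym_diff S' T = sym_diff S T - {x}"
    "x \<in> sym_diff S T"
proof (cases "T \<subseteq> S")
  case True
  with \<open>S \<noteq> T\<close> obtain x where x: "x \<in> S" "x \<notin> T" by blast
  have "T \<subseteq> S - {x}" "S - {x} \<subseteq> V" using True x upclosed_subset[OF F S] by auto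
  then have "S - {x} \<in> F" by (rule upclosed_superset[OF F T])
  then show ?thesis by (rule that) (use True x in auto)
next
  case False
  then obtain x where x: "x \<in> T" "x \<notin> S" by blast
  have "S \<subseteq> insert x S" "insert x S \<subseteq> V"
    using x upclosed_subset[OF F S] upclosed_subset[OF F T] by auto
  then have "insert x S \<in> F" by (rule upclosed_superset[OF F S])
  then show ?thesis by (rule that) (use x in auto)
qed

lemma card_sym_diff_image_le:
  assumes F: "upclosed V F" and "finite V"
    and fin: "\<And>S. S \<in> F \<Longrightarrow> finite (\<phi> S)"
    and adj: "\<And>S T. S \<in> F \<Longrightarrow> T \<in> F \<Longrightarrow> card (sym_diff S T) = 1 \<Longrightarrow>
      card (sym_diff (\<phi> S) (\<phi> T)) = 1"
    and "S \<in> F" "T \<in> F"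
  shows "card (sym_diff (\<phi> S) (\<phi> T)) \<le> card (sym_diff S T)"
proof -
  have fin_sym_diff: "finite (sym_diff S T)" if "S \<in> F" for S
    using upclosed_finite_member[OF F \<open>finite V\<close>] that \<open>T \<in> F\<close> by simp
  show ?thesis
    using \<open>S \<in> F\<close>
  proof (induction "card (sym_diff S T)" arbitrary: S)
    case 0
    then have "S = T" using fin_sym_diff[of S] by auto
    then show ?case by simp
  next
    case (Suc n)
    then have "S \<noteq> T" by auto
    then obtain S' x where S': "S' \<in> F" "sym_diff S S' = {x}"
      "sym_diff S' T = sym_diff S T - {x}" "x \<in> sym_diff S T"
      using upclosed_step_towards[OF F \<open>S \<in> F\<close> \<open>T \<in> F\<close>] by blast
    then have "card (sym_diff S' T) = n" using fin_sym_diff[OF Suc.prems] Suc.hyps(2) by simp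
    then have IH: "card (sym_diff (\<phi> S') (\<phi> T)) \<le> n"
      using Suc.hyps(1)[of S'] S'(1) by simp
    have "card (sym_diff (\<phi> S) (\<phi> T)) \<le>
        card (sym_diff (\<phi> S) (\<phi> S')) + card (sym_diff (\<phi> S') (\<phi> T))"
      using fin Suc.prems S'(1) \<open>T \<in> F\<close> by (intro card_sym_diff_triangle)
    also have "card (sym_diff (\<phi> S) (\<phi> S')) = 1" using adj[OF Suc.prems S'(1)] S'(2) by simp
    finally show ?case using IH Suc.hyps(2) by simp
  qed
qed

lemma card_sym_diff_bij_eq:
  assumes F: "upclosed V F" and F': "upclosed V' F'" and "finite V" "finite V'"
    and bij: "bij_betw \<phi> F F'"
    and adj: "\<And>S T. S \<in> F \<Longrightarrow> T \<in> F \<Longrightarrow>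
      card (sym_diff S T) = 1 \<longleftrightarrow> card (sym_diff (\<phi> S) (\<phi> T)) = 1"
    and "S \<in> F" "T \<in> F"
  shows "card (sym_diff (\<phi> S) (\<phi> T)) = card (sym_diff S T)"
proof (rule antisym)
  have \<phi>: "\<phi> S \<in> F'" if "S \<in> F" for S using bij that by (rule bij_betw_apply)
  show "card (sym_diff (\<phi> S) (\<phi> T)) \<le> card (sym_diff S T)"
  proof (rule card_sym_diff_image_le[OF F \<open>finite V\<close> _ _ \<open>S \<in> F\<close> \<open>T \<in> F\<close>])
    show "finite (\<phi> S)" if "S \<in> F" for S
      using upclosed_finite_member[OF F' \<open>finite V'\<close> \<phi>[OF that]] .
  qed (metis adj)
  let ?\<phi>' = "inv_into F \<phi>"
  have \<phi>': "?\<phi>' S' \<in> F" "\<phi> (?\<phi>' S') = S'" if "S' \<in> F'" for S'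
    using bij that by (auto simp: bij_betw_def inv_into_into f_inv_into_f)
  have inv: "?\<phi>' (\<phi> S) = S" if "S \<in> F" for S
    using bij that by (simp add: bij_betw_def inv_into_f_f)
  have "card (sym_diff (?\<phi>' (\<phi> S)) (?\<phi>' (\<phi> T))) \<le> card (sym_diff (\<phi> S) (\<phi> T))"
  proof (rule card_sym_diff_image_le[OF F' \<open>finite V'\<close>])
    show "finite (?\<phi>' S')" if "S' \<in> F'" for S'
      using upclosed_finite_member[OF F \<open>finite V\<close> \<phi>'(1)[OF that]] .
    show "card (sym_diff (?\<phi>' S') (?\<phi>' T')) = 1"
      if "S' \<in> F'" "T' \<in> F'" "card (sym_diff S' T') = 1" for S' T'
      using adj[OF \<phi>'(1)[OF that(1)] \<phi>'(1)[OF that(2)]] that by (simp add: \<phi>')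
  qed (use \<phi> \<open>S \<in> F\<close> \<open>T \<in> F\<close> in simp_all)
  then show "card (sym_diff S T) \<le> card (sym_diff (\<phi> S) (\<phi> T))"
    using inv \<open>S \<in> F\<close> \<open>T \<in> F\<close> by simp
qed

lemma coatom_labelling:
  assumes "F \<subseteq> Pow V" "V \<in> F" and coatoms: "\<And>v. v \<in> V \<Longrightarrow> V - {v} \<in> F"
    and \<phi>: "\<And>S. S \<in> F \<Longrightarrow> \<phi> S \<subseteq> V'" and "finite V" "finite V'"
    and dist: "\<And>S T. S \<in> F \<Longrightarrow> T \<in> F \<Longrightarrow>
      card (sym_diff (\<phi> S) (\<phi> T)) = card (sym_diff S T)"
  obtains \<psi> where "inj_on \<psi> V" "\<psi> ` V \<subseteq> V'"
    "\<And>S v. S \<in> F \<Longrightarrow> v \<in> V \<Longrightarrow> \<psi> v \<in> sym_diff (\<phi> S) (\<phi> V) \<longleftrightarrow> v \<notin> S"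
proof -
  have coatom_sym_diff: "sym_diff (V - {v}) V = {v}" if "v \<in> V" for v
    using that by auto
  have "\<exists>y. sym_diff (\<phi> (V - {v})) (\<phi> V) = {y}" if "v \<in> V" for v
  proof -
    have "card (sym_diff (\<phi> (V - {v})) (\<phi> V)) = 1"
      using dist[OF coatoms[OF that] \<open>V \<in> F\<close>] coatom_sym_diff[OF that] by simp
    then show ?thesis by (simp add: card_1_singleton_iff)
  qed
  then obtain \<psi> where \<psi>: "\<And>v. v \<in> V \<Longrightarrow> sym_diff (\<phi> (V - {v})) (\<phi> V) = {\<psi> v}"
    by metis
  have label: "\<psi> v \<in> sym_diff (\<phi> S) (\<phi> V) \<longleftrightarrow> v \<notin> S" if S: "S \<in> F" and v: "v \<in> V" for S v
  proof -
    have "S \<subseteq> V" using S \<open>F \<subseteq> Pow V\<close> by blast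
    then have fin: "finite S" "finite (\<phi> S)" "finite (\<phi> V)"
      using \<phi>[OF S] \<phi>[OF \<open>V \<in> F\<close>] \<open>finite V\<close> \<open>finite V'\<close> by (auto intro: finite_subset)
    \<comment> \<open>the distance to the coatom differs by one from the distance to the top, in a direction
      decided by \<open>\<psi> v\<close> resp. \<open>v\<close>\<close>
    have "card (sym_diff (\<phi> S) (\<phi> (V - {v}))) = card (sym_diff S (V - {v}))"
      by (rule dist[OF S coatoms[OF v]])
    moreover have "card (sym_diff (\<phi> S) (\<phi> (V - {v}))) =
        (if \<psi> v \<in> sym_diff (\<phi> S) (\<phi> V) then card (sym_diff (\<phi> S) (\<phi> V)) - 1
         else card (sym_diff (\<phi> S) (\<phi> V)) + 1)"
      using fin by (intro card_sym_diff_flip \<psi>[OF v])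
    moreover have "card (sym_diff S (V - {v})) =
        (if v \<in> sym_diff S V then card (sym_diff S V) - 1 else card (sym_diff S V) + 1)"
      using fin \<open>finite V\<close> by (intro card_sym_diff_flip coatom_sym_diff[OF v])
    moreover have "card (sym_diff (\<phi> S) (\<phi> V)) = card (sym_diff S V)"
      by (rule dist[OF S \<open>V \<in> F\<close>])
    ultimately have "\<psi> v \<in> sym_diff (\<phi> S) (\<phi> V) \<longleftrightarrow> v \<in> sym_diff S V"
      by (auto split: if_splits)
    then show ?thesis using v by blast
  qed
  show ?thesis
  proof (rule that[OF _ _ label])
    show "inj_on \<psi> V"
    proof (rule inj_onI)
      fix u v assume "u \<in> V" "v \<in> V" "\<psi> u = \<psi> v"
      then have "\<psi> v \<in> sym_diff (\<phi> (V - {u})) (\<phi> V)" using \<psi> by simp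
      then show "u = v" using label[OF coatoms[OF \<open>u \<in> V\<close>] \<open>v \<in> V\<close>] \<open>v \<in> V\<close> by simp
    qed
    show "\<psi> ` V \<subseteq> V'"
    proof (rule image_subsetI)
      fix v assume v: "v \<in> V"
      have "\<psi> v \<in> sym_diff (\<phi> (V - {v})) (\<phi> V)" using \<psi>[OF v] by simp
      then show "\<psi> v \<in> V'" using \<phi>[OF coatoms[OF v]] \<phi>[OF \<open>V \<in> F\<close>] by blast
    qed
  qed
qed

text \<open>The labelling says \<open>\<phi> S = \<psi> ` S\<close> up to flipping membership on \<open>V' - W\<close>; adding the
  \<open>\<psi>\<close>-preimage of \<open>V' - W\<close> on one side, or \<open>V' - W\<close> itself on the other, removes the flip.\<close>

lemma upclosed_transfer_by_labelling:
  assumes \<psi>: "bij_betw \<psi> V V'" and F: "upclosed V F" and F': "upclosed V' F'"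
    and \<phi>: "\<phi> ` F = F'"
    and label: "\<And>S v. S \<in> F \<Longrightarrow> v \<in> V \<Longrightarrow> \<psi> v \<in> sym_diff (\<phi> S) W \<longleftrightarrow> v \<notin> S"
    and "S \<subseteq> V"
  shows "S \<in> F \<longleftrightarrow> \<psi> ` S \<in> F'"
proof
  have \<psi>V: "\<psi> ` V = V'" using \<psi> by (simp add: bij_betw_def)
  assume "S \<in> F"
  define S' where "S' = S \<union> {v \<in> V. \<psi> v \<notin> W}"
  have "S \<subseteq> S'" "S' \<subseteq> V" using \<open>S \<subseteq> V\<close> by (auto simp: S'_def)
  then have "S' \<in> F" by (rule upclosed_superset[OF F \<open>S \<in> F\<close>])
  then have "\<phi> S' \<in> F'" using \<phi> by blast
  have "\<phi> S' \<subseteq> \<psi> ` S"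
  proof
    fix y assume y: "y \<in> \<phi> S'"
    then have "y \<in> V'" using upclosed_subset[OF F' \<open>\<phi> S' \<in> F'\<close>] by blast
    then obtain v where v: "v \<in> V" "y = \<psi> v" using \<psi>V by blast
    have "\<psi> v \<in> sym_diff (\<phi> S') W \<longleftrightarrow> v \<notin> S'" by (rule label[OF \<open>S' \<in> F\<close> \<open>v \<in> V\<close>])
    then have "v \<in> S" using v y by (auto simp: S'_def)
    then show "y \<in> \<psi> ` S" using v by blast
  qed
  moreover have "\<psi> ` S \<subseteq> V'" using \<open>S \<subseteq> V\<close> \<psi>V by blast
  ultimately show "\<psi> ` S \<in> F'" by (rule upclosed_superset[OF F' \<open>\<phi> S' \<in> F'\<close>])
next
  have \<psi>V: "\<psi> ` V = V'" and inj: "inj_on \<psi> V" using \<psi> by (auto simp: bij_betw_def)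
  assume "\<psi> ` S \<in> F'"
  define T where "T = \<psi> ` S \<union> (V' - W)"
  have "\<psi> ` S \<subseteq> T" "T \<subseteq> V'" using \<open>S \<subseteq> V\<close> \<psi>V by (auto simp: T_def)
  then have "T \<in> F'" by (rule upclosed_superset[OF F' \<open>\<psi> ` S \<in> F'\<close>])
  then obtain R where "R \<in> F" "\<phi> R = T" using \<phi> by blast
  have "R \<subseteq> S"
  proof
    fix v assume "v \<in> R"
    then have "v \<in> V" using upclosed_subset[OF F \<open>R \<in> F\<close>] by blast
    have "\<psi> v \<notin> sym_diff T W"
      using label[OF \<open>R \<in> F\<close> \<open>v \<in> V\<close>] \<open>v \<in> R\<close> \<open>\<phi> R = T\<close> by simp
    moreover have "\<psi> v \<in> V'" using \<open>v \<in> V\<close> \<psi>V by blast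
    ultimately have "\<psi> v \<in> \<psi> ` S" by (auto simp: T_def)
    then show "v \<in> S" using inj \<open>v \<in> V\<close> \<open>S \<subseteq> V\<close> by (simp add: inj_on_image_mem_iff)
  qed
  then show "S \<in> F" by (rule upclosed_superset[OF F \<open>R \<in> F\<close> _ \<open>S \<subseteq> V\<close>])
qed

theorem upclosed_families_relabelling:
  assumes "finite V" "finite V'" and F: "upclosed V F" and F': "upclosed V' F'"
    and "V \<in> F" "V' \<in> F'"
    and "\<And>v. v \<in> V \<Longrightarrow> V - {v} \<in> F" "\<And>v. v \<in> V' \<Longrightarrow> V' - {v} \<in> F'"
    and bij: "bij_betw \<phi> F F'"
    and adj: "\<And>S T. S \<in> F \<Longrightarrow> T \<in> F \<Longrightarrow>
      card (sym_diff S T) = 1 \<longleftrightarrow> card (sym_diff (\<phi> S) (\<phi> T)) = 1"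
  obtains \<psi> where "bij_betw \<psi> V V'" "\<And>S. S \<subseteq> V \<Longrightarrow> S \<in> F \<longleftrightarrow> \<psi> ` S \<in> F'"
proof -
  let ?\<phi>' = "inv_into F \<phi>"
  have \<phi>F: "\<phi> ` F = F'" and \<phi>'F: "?\<phi>' ` F' = F"
    using bij bij_betw_inv_into[OF bij] by (auto simp: bij_betw_def)
  have dist: "card (sym_diff (\<phi> S) (\<phi> T)) = card (sym_diff S T)" if "S \<in> F" "T \<in> F" for S T
    using card_sym_diff_bij_eq[OF F F' \<open>finite V\<close> \<open>finite V'\<close> bij adj that] .
  have dist': "card (sym_diff (?\<phi>' S) (?\<phi>' T)) = card (sym_diff S T)"
    if "S \<in> F'" "T \<in> F'" for S T
  proof -
    have "?\<phi>' S \<in> F" "?\<phi>' T \<in> F" using that \<phi>'F by auto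
    from dist[OF this] show ?thesis
      using that bij by (simp add: bij_betw_def f_inv_into_f)
  qed
  have FV: "F \<subseteq> Pow V" and F'V': "F' \<subseteq> Pow V'"
    using upclosed_subset[OF F] upclosed_subset[OF F'] by blast+
  have \<phi>V': "\<phi> S \<subseteq> V'" if "S \<in> F" for S using F'V' \<phi>F that by blast
  have \<phi>'V: "?\<phi>' S \<subseteq> V" if "S \<in> F'" for S using FV \<phi>'F that by blast
  obtain \<psi> where \<psi>: "inj_on \<psi> V" "\<psi> ` V \<subseteq> V'"
    and label: "\<And>S v. S \<in> F \<Longrightarrow> v \<in> V \<Longrightarrow> \<psi> v \<in> sym_diff (\<phi> S) (\<phi> V) \<longleftrightarrow> v \<notin> S"
    by (rule coatom_labelling[of F V \<phi> V'])
      (simp_all add: FV \<open>V \<in> F\<close> assms(1,2,7) \<phi>V' dist)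
  obtain \<psi>' where \<psi>': "inj_on \<psi>' V'" "\<psi>' ` V' \<subseteq> V"
    by (rule coatom_labelling[of F' V' ?\<phi>' V])
      (simp_all add: F'V' \<open>V' \<in> F'\<close> assms(1,2,8) \<phi>'V dist')
  have "card V \<le> card V'" "card V' \<le> card V"
    using card_inj_on_le[OF \<psi> \<open>finite V'\<close>] card_inj_on_le[OF \<psi>' \<open>finite V\<close>] .
  then have "\<psi> ` V = V'"
    using \<psi> \<open>finite V'\<close> by (simp add: card_image card_subset_eq)
  with \<psi>(1) have "bij_betw \<psi> V V'" by (simp add: bij_betw_def)
  then show ?thesis
    using upclosed_transfer_by_labelling[OF _ F F' \<phi>F label] that by blast
qed

lemma super_paramD:
  assumes "super_param X" "is_graph G"
  shows "S \<in> X G \<Longrightarrow> S \<subseteq> verts G"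
    and "is_graph H \<Longrightarrow> graph_iso G H f \<Longrightarrow> S \<in> X G \<Longrightarrow> f ` S \<in> X H"
    and "X G \<noteq> {}"
    and "S \<in> X G \<Longrightarrow> S \<subseteq> S' \<Longrightarrow> S' \<subseteq> verts G \<Longrightarrow> S' \<in> X G"
  using assms unfolding super_param_def by metis+

lemma super_param_upclosed:
  assumes "super_param X" "is_graph G"
  shows "upclosed (verts G) (X G)"
  unfolding upclosed_def using super_paramD(1,4)[OF assms] by blast

lemma super_param_verts_mem:
  assumes "super_param X" "is_graph G"
  shows "verts G \<in> X G"
proof -
  obtain S where "S \<in> X G" using super_paramD(3)[OF assms] by blast
  then show ?thesis using super_paramD(1,4)[OF assms] by blast
qed

lemma super_param_empty_mem_K1:
  assumes sp: "super_param X" and "param_num X (K1 v) = 0"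
  shows "{} \<in> X (K1 w)"
proof -
  have K1: "is_graph (K1 u)" for u by (simp add: is_graph_def K1_def verts_def edges_def)
  have sub: "X (K1 v) \<subseteq> Pow {v}"
    using super_paramD(1)[OF sp K1] by (auto simp: K1_def verts_def)
  then have "finite (card ` X (K1 v))" by (simp add: finite_subset)
  then have "param_num X (K1 v) \<in> card ` X (K1 v)"
    unfolding param_num_def using super_paramD(3)[OF sp K1] by (intro Min_in) auto
  then obtain S where S: "S \<in> X (K1 v)" "card S = 0" using assms(2) by auto
  moreover have "finite S" using S(1) sub finite_subset by blast
  ultimately have empty: "{} \<in> X (K1 v)" by simp
  have "graph_iso (K1 v) (K1 w) (\<lambda>_. w)"
    by (simp add: graph_iso_def K1_def verts_def edges_def bij_betw_def)
  from super_paramD(2)[OF sp K1 K1 this empty] show ?thesis by simp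
qed

lemma component_of_subset_verts:
  assumes "is_graph G" "x \<in> verts G"
  shows "component_of G x \<subseteq> verts G"
proof
  fix u assume "u \<in> component_of G x"
  then have "(x, u) \<in> (edges G)\<^sup>*" by (simp add: component_of_def)
  then show "u \<in> verts G"
    by (induction rule: rtrancl_induct) (use assms in \<open>auto simp: is_graph_def\<close>)
qed

lemma component_of_edge_closed:
  "u \<in> component_of G x \<Longrightarrow> (u, w) \<in> edges G \<Longrightarrow> w \<in> component_of G x"
  by (simp add: component_of_def rtrancl_into_rtrancl)

lemma rtrancl_within_component_of:
  assumes "u \<in> component_of G x"
  shows "(x, u) \<in> (edges G \<inter> component_of G x \<times> component_of G x)\<^sup>*"
proof -
  have "(x, u) \<in> (edges G)\<^sup>*" using assms by (simp add: component_of_def)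
  then show ?thesis
  proof (induction rule: rtrancl_induct)
    case (step y z)
    then have "y \<in> component_of G x" "z \<in> component_of G x"
      by (auto simp: component_of_def)
    with step show ?case by (blast intro: rtrancl_into_rtrancl)
  qed simp
qed

lemma
  assumes G: "is_graph G" and x: "x \<in> verts G"
  shows is_graph_induced_component: "is_graph (induced G (component_of G x))"
    and connected_induced_component: "connected_graph (induced G (component_of G x))"
proof -
  let ?C = "component_of G x"
  let ?E = "edges G \<inter> ?C \<times> ?C"
  have V: "verts (induced G ?C) = ?C" and E: "edges (induced G ?C) = ?E"
    by (simp_all add: induced_def verts_def edges_def)
  have "x \<in> ?C" by (simp add: component_of_def)
  have "sym (edges G)" "irrefl (edges G)" using G by (auto simp: is_graph_def)
  then have sym: "sym ?E" and "irrefl ?E" by (auto simp: sym_def irrefl_def)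
  moreover have "finite ?C" using component_of_subset_verts[OF G x] G
    by (auto simp: is_graph_def intro: finite_subset)
  ultimately show "is_graph (induced G ?C)"
    unfolding is_graph_def V E using \<open>x \<in> ?C\<close> by blast
  show "connected_graph (induced G ?C)" unfolding connected_graph_def V E
  proof (intro ballI)
    fix u w assume "u \<in> ?C" "w \<in> ?C"
    then have "(x, u) \<in> ?E\<^sup>*" "(x, w) \<in> ?E\<^sup>*" by (simp_all add: rtrancl_within_component_of)
    moreover have "(u, x) \<in> ?E\<^sup>*"
      using \<open>(x, u) \<in> ?E\<^sup>*\<close> sym_rtrancl[OF sym] by (auto simp: sym_def)
    ultimately show "(u, w) \<in> ?E\<^sup>*" by simp
  qed
qed

lemma robust_paramD:
  assumes "robust_param X" "is_graph G"
  shows "connected_graph G \<Longrightarrow> card (verts G) \<ge> 2 \<Longrightarrow> S \<subseteq> verts G \<Longrightarrow>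
      card S = card (verts G) - 1 \<Longrightarrow> S \<in> X G"
    and "S \<subseteq> verts G \<Longrightarrow> S \<in> X G \<longleftrightarrow> (\<forall>C\<in>components G. S \<inter> C \<in> X (induced G C))"
  using assms unfolding robust_param_def by blast+

lemma robust_param_coatom_mem:
  assumes R: "robust_param X" and G: "is_graph G" and v: "v \<in> verts G"
    and K1: "{} \<in> X (K1 v) \<or> no_isolated G"
  shows "verts G - {v} \<in> X G"
proof -
  have sp: "super_param X" using R by (simp add: robust_param_def)
  have "(verts G - {v}) \<inter> C \<in> X (induced G C)" if "C \<in> components G" for C
  proof -
    obtain x where x: "x \<in> verts G" and C: "C = component_of G x"
      using \<open>C \<in> components G\<close> by (auto simp: components_def)
    have CG: "is_graph (induced G C)" "connected_graph (induced G C)"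
      using is_graph_induced_component[OF G x] connected_induced_component[OF G x] C by simp_all
    have VC: "verts (induced G C) = C" by (simp add: induced_def verts_def)
    have "C \<subseteq> verts G" using component_of_subset_verts[OF G x] C by simp
    then have "finite C" using G by (auto simp: is_graph_def intro: finite_subset)
    consider "v \<notin> C" | "C = {v}" | "v \<in> C" "C \<noteq> {v}" by blast
    then show ?thesis
    proof cases
      case 1
      then have "(verts G - {v}) \<inter> C = verts (induced G C)" using \<open>C \<subseteq> verts G\<close> VC by auto
      then show ?thesis using super_param_verts_mem[OF sp CG(1)] by simp
    next
      case 2
      have "(v, u) \<notin> edges G" for u
      proof
        assume "(v, u) \<in> edges G"
        then have "u \<in> C" "u \<noteq> v"
          using component_of_edge_closed[of v G x u] 2 C G by (auto simp: is_graph_def irrefl_def)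
        with 2 show False by blast
      qed
      then have "{} \<in> X (K1 v)" using K1 v by (auto simp: no_isolated_def)
      moreover have "induced G C = K1 v"
        using G 2 by (auto simp: induced_def K1_def is_graph_def irrefl_def)
      ultimately show ?thesis using 2 by simp
    next
      case 3
      then obtain u where "u \<in> C" "u \<noteq> v" by blast
      then have "card {u, v} \<le> card C" using 3 \<open>finite C\<close> by (intro card_mono) auto
      then have two: "card (verts (induced G C)) \<ge> 2" using \<open>u \<noteq> v\<close> VC by simp
      have "(verts G - {v}) \<inter> C = C - {v}" using \<open>C \<subseteq> verts G\<close> by blast
      then have "card ((verts G - {v}) \<inter> C) = card (verts (induced G C)) - 1"
        using 3 \<open>finite C\<close> VC by simp
      then show ?thesis
        by (rule robust_paramD(1)[OF R CG two, rotated]) (use VC in auto)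
    qed
  qed
  then show ?thesis using robust_paramD(2)[OF R G, of "verts G - {v}"] by blast
qed

lemma tar_graph_isoD:
  assumes "graph_iso (tar_graph X G) (tar_graph X G') f"
  shows "bij_betw f (X G) (X G')"
    and "S \<in> X G \<Longrightarrow> T \<in> X G \<Longrightarrow>
      card (sym_diff S T) = 1 \<longleftrightarrow> card (sym_diff (f S) (f T)) = 1"
proof -
  show bij: "bij_betw f (X G) (X G')"
    using assms by (simp add: graph_iso_def tar_graph_def verts_def)
  assume "S \<in> X G" "T \<in> X G"
  moreover have "f S \<in> X G'" "f T \<in> X G'"
    using bij_betw_apply[OF bij] \<open>S \<in> X G\<close> \<open>T \<in> X G\<close> by blast+
  ultimately show "card (sym_diff S T) = 1 \<longleftrightarrow> card (sym_diff (f S) (f T)) = 1"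
    using assms by (simp add: graph_iso_def tar_graph_def verts_def edges_def)
qed

theorem theorem2p12:
  fixes X :: "'v::infinite graph \<Rightarrow> 'v set set" and G G' :: "'v graph"
  assumes "robust_param X"
    and "is_graph G" and "is_graph G'"
    and "isomorphic (tar_graph X G) (tar_graph X G')"
    and "(\<exists>v. param_num X (K1 v) = 0) \<or> (no_isolated G \<and> no_isolated G')"
  shows "card (verts G) = card (verts G') \<and>
         (\<exists>\<psi>. bij_betw \<psi> (verts G) (verts G') \<and>
              (\<forall>S. S \<subseteq> verts G \<longrightarrow> (S \<in> X G \<longleftrightarrow> \<psi> ` S \<in> X G')))"
proof -
  have sp: "super_param X" using assms(1) by (simp add: robust_param_def)
  obtain f where f: "graph_iso (tar_graph X G) (tar_graph X G') f"
    using assms(4) by (auto simp: isomorphic_def)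
  have K1: "{} \<in> X (K1 v) \<or> no_isolated G \<and> no_isolated G'" for v
    using assms(5) super_param_empty_mem_K1[OF sp] by blast
  have fin: "finite (verts G)" "finite (verts G')" using assms(2,3) by (simp_all add: is_graph_def)
  obtain \<psi> where \<psi>: "bij_betw \<psi> (verts G) (verts G')"
    and "\<And>S. S \<subseteq> verts G \<Longrightarrow> S \<in> X G \<longleftrightarrow> \<psi> ` S \<in> X G'"
  proof (rule upclosed_families_relabelling[OF fin
        super_param_upclosed[OF sp assms(2)] super_param_upclosed[OF sp assms(3)]
        super_param_verts_mem[OF sp assms(2)] super_param_verts_mem[OF sp assms(3)] _ _
        tar_graph_isoD(1)[OF f]])
    show "verts G - {v} \<in> X G" if "v \<in> verts G" for v
      using robust_param_coatom_mem[OF assms(1,2) that] K1 by blast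
    show "verts G' - {v} \<in> X G'" if "v \<in> verts G'" for v
      using robust_param_coatom_mem[OF assms(1,3) that] K1 by blast
  qed (use tar_graph_isoD(2)[OF f] in auto)
  then show ?thesis using bij_betw_same_card[OF \<psi>] by blast
qed

end
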